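(* Let $p\ge3$ be a prime and let $C$ be a Hochschild cochain complex, free over $\mathbb Z$, with its cup product $*$ and brace operations. Let $\tilde x\in C$ be a cochain of odd degree with $\partial\tilde x\in pC$, and let $x$ be its image in $C\otimes\mathbb Z_p$, so that $x$ is a cycle. For a cochain $\tilde y$ with $\partial\tilde y\in pC$ and image $y$ mod $p$, define the chain-level Bockstein $\beta y:=\frac1p\partial\tilde y\bmod p$. Set $\xi_1x:=x^{[p]}$ and $\zeta_1x:=\sum_{i=1}^{p-1}\frac{(-1)^i}{i}x^{[i]}*x^{[p-i]}$, where $x^{[k]}=(\cdots((x\{x\})\{x\})\cdots)\{x\}$ ($k-1$ braces). Then, on the level of chains in $C\otimes\mathbb Z_p$, $$\zeta_1x=\beta(\xi_1x)-(\mathrm{ad}\,x)^{p-1}(\beta x),$$ where $\beta(\xi_1x)$ is computed from the lift $\tilde x^{[p]}$, and $\mathrm{ad}\,x=[x,\cdot\,]$ with Gerstenhaber bracket $[a,b]=a\{b\}-(-1)^{|a||b|}b\{a\}$, $|a|=\deg a+1$.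
   Context: For the Hochschild cochain complex of an associative algebra, $*$ is the cup product and $a\{b_1,\dots,b_n\}$ are the Gerstenhaber–Voronov brace operations; $\deg$ is the cochain degree, and the brace $\{\}_{n+1}$ raises $\deg$ by $n$. *)

theory Defs
  imports "HOL-Number_Theory.Cong"
begin

text \<open>A homogeneous cochain of degree n is a function f :: 'a list => 'a, of which only
the values on lists of length n matter, and which is additive in each of its n slots
(Z-multilinear).  Degrees are carried explicitly as natural-number parameters.\<close>

definition nsm :: "nat \<Rightarrow> 'a::comm_monoid_add \<Rightarrow> 'a" where
  "nsm k a = (\<Sum>i<k. a)"

definition zsm :: "int \<Rightarrow> 'a::ab_group_add \<Rightarrow> 'a" where
  "zsm k a = (if 0 \<le> k then nsm (nat k) a else - nsm (nat (- k)) a)"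

definition sgnpow :: "nat \<Rightarrow> 'a::ab_group_add \<Rightarrow> 'a" where
  "sgnpow k a = (if even k then a else - a)"

definition torsion_free :: "'a::ab_group_add itself \<Rightarrow> bool" where
  "torsion_free T \<longleftrightarrow> (\<forall>k (a::'a). 0 < k \<longrightarrow> nsm k a = 0 \<longrightarrow> a = 0)"

definition hoch_cochain :: "nat \<Rightarrow> ('a::ring list \<Rightarrow> 'a) \<Rightarrow> bool" where
  "hoch_cochain n f \<longleftrightarrow>
     (\<forall>xs ys u v. length xs + length ys + 1 = n \<longrightarrow>
        f (xs @ (u + v) # ys) = f (xs @ u # ys) + f (xs @ v # ys))"

definition cup :: "nat \<Rightarrow> ('a::ring list \<Rightarrow> 'a) \<Rightarrow> ('a list \<Rightarrow> 'a) \<Rightarrow> 'a list \<Rightarrow> 'a" where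
  "cup m f g = (\<lambda>xs. f (take m xs) * g (drop m xs))"

definition brace :: "nat \<Rightarrow> nat \<Rightarrow> ('a::ring list \<Rightarrow> 'a) \<Rightarrow> ('a list \<Rightarrow> 'a) \<Rightarrow> 'a list \<Rightarrow> 'a" where
  "brace m n f g = (\<lambda>xs. \<Sum>i<m. sgnpow ((n + 1) * i)
       (f (take i xs @ g (take n (drop i xs)) # drop (i + n) xs)))"

definition hdiff :: "nat \<Rightarrow> ('a::ring list \<Rightarrow> 'a) \<Rightarrow> 'a list \<Rightarrow> 'a" where
  "hdiff n f = (\<lambda>xs. xs ! 0 * f (drop 1 xs)
      + (\<Sum>i\<in>{1..n}. sgnpow i (f (take (i - 1) xs @ (xs ! (i - 1) * xs ! i) # drop (i + 1) xs)))
      + sgnpow (n + 1) (f (take n xs) * xs ! n))"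

definition gbracket :: "nat \<Rightarrow> nat \<Rightarrow> ('a::ring list \<Rightarrow> 'a) \<Rightarrow> ('a list \<Rightarrow> 'a) \<Rightarrow> 'a list \<Rightarrow> 'a" where
  "gbracket m n f g = (\<lambda>xs. brace m n f g xs - sgnpow ((m + 1) * (n + 1)) (brace n m g f xs))"

text \<open>Brace powers x^[k] = (..((x{x}){x})..){x} (k-1 braces), x of degree n;
x^[k] has degree k(n-1)+1.  The value at k = 0 is a junk value and never used.\<close>
fun brpow :: "nat \<Rightarrow> ('a::ring list \<Rightarrow> 'a) \<Rightarrow> nat \<Rightarrow> 'a list \<Rightarrow> 'a" where
  "brpow n x 0 = x"
| "brpow n x (Suc 0) = x"
| "brpow n x (Suc (Suc k)) = brace (Suc k * (n - 1) + 1) n (brpow n x (Suc k)) x"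

fun adpow :: "nat \<Rightarrow> nat \<Rightarrow> ('a::ring list \<Rightarrow> 'a) \<Rightarrow> nat \<Rightarrow> ('a list \<Rightarrow> 'a) \<Rightarrow> 'a list \<Rightarrow> 'a" where
  "adpow n m x 0 b = b"
| "adpow n m x (Suc k) b = gbracket n (m + k * (n - 1)) x (adpow n m x k b)"

definition bock :: "nat \<Rightarrow> nat \<Rightarrow> ('a::ring list \<Rightarrow> 'a) \<Rightarrow> 'a list \<Rightarrow> 'a" where
  "bock p N f = (\<lambda>xs. SOME z. nsm p z = hdiff N f xs)"

definition inv_modp :: "nat \<Rightarrow> nat \<Rightarrow> int" where
  "inv_modp p i = (SOME j. [int i * j = 1] (mod int p))"

definition xi1 :: "nat \<Rightarrow> nat \<Rightarrow> ('a::ring list \<Rightarrow> 'a) \<Rightarrow> 'a list \<Rightarrow> 'a" where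
  "xi1 p n x = brpow n x p"

definition zeta1 :: "nat \<Rightarrow> nat \<Rightarrow> ('a::ring list \<Rightarrow> 'a) \<Rightarrow> 'a list \<Rightarrow> 'a" where
  "zeta1 p n x = (\<lambda>xs. \<Sum>i\<in>{1..p - 1}.
      zsm ((-1) ^ i * inv_modp p i) (cup (i * (n - 1) + 1) (brpow n x i) (brpow n x (p - i)) xs))"

text \<open>Equality of degree-N cochains in C (x) Z_p = C / pC.\<close>
definition cong_modp :: "nat \<Rightarrow> nat \<Rightarrow> ('a::ring list \<Rightarrow> 'a) \<Rightarrow> ('a list \<Rightarrow> 'a) \<Rightarrow> bool" where
  "cong_modp p N f g \<longleftrightarrow> (\<forall>xs. length xs = N \<longrightarrow> (\<exists>z. f xs - g xs = nsm p z))"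

end

theory Submission
  imports Defs
begin

(* Write b for the Bockstein of x, so that dx = p b, and R for the right brace with x.
   Since x has odd degree, the pre-Lie identity makes the associator of the brace symmetric, which gives
   x^[k]{y} = sum_j (k choose j) R^(k-j) ((ad x)^j y).  Combined with Gerstenhaber's homotopy formula
   d(f{g}) = (df){g} + f{dg} - f*g - g*f (signs for odd degrees) this yields, by induction on k,
     d(x^[k]) = p sum_(j<k) (k choose j+1) R^(k-1-j) ((ad x)^j b) - sum_(0<i<k) (k choose i) x^[i] * x^[k-i].
   For k = p every coefficient (p choose j+1) with j < p - 1 vanishes modulo p, leaving (ad x)^(p-1) b,
   and (p choose i)/p is congruent to -(-1)^i/i, which turns the cup product sum into zeta_1 x. *)

section \<open>Integer multiples and signs\<close>

lemma nsm_0 [simp]: "nsm 0 a = 0"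
  by (simp add: nsm_def)

lemma nsm_Suc: "nsm (Suc k) a = a + nsm k a"
  by (simp add: nsm_def add.commute)

lemma nsm_Suc_0 [simp]: "nsm (Suc 0) a = a"
  by (simp add: nsm_def)

lemma nsm_add_left: "nsm (k + l) a = nsm k a + nsm l (a::'a::comm_monoid_add)"
  by (induct k) (simp_all add: nsm_Suc add.assoc)

lemma nsm_nsm: "nsm k (nsm l a) = nsm (k * l) (a::'a::comm_monoid_add)"
  by (induct k) (simp_all add: nsm_Suc nsm_add_left)

lemma nsm_add_right: "nsm k (a + b) = nsm k a + nsm k (b::'a::comm_monoid_add)"
  by (simp add: nsm_def sum.distrib)

lemma nsm_minus_right: "nsm k (- a) = - nsm k (a::'a::ab_group_add)"
  by (simp add: nsm_def sum_negf)

lemma nsm_diff_right: "nsm k (a - b) = nsm k a - nsm k (b::'a::ab_group_add)"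
  by (simp add: nsm_def sum_subtractf)

lemma nsm_sum_right: "nsm k (\<Sum>i\<in>A. f i) = (\<Sum>i\<in>A. nsm k (f i :: 'a::comm_monoid_add))"
  unfolding nsm_def by (rule sum.swap)

lemma zsm_of_nat [simp]: "zsm (int k) a = nsm k a"
  by (simp add: zsm_def)

lemma zsm_minus_of_nat: "zsm (- int k) a = - nsm k a"
  by (cases "k = 0") (simp_all add: zsm_def)

lemma zsm_diff_of_nat: "zsm (int k - int l) a = nsm k a - nsm l (a::'a::ab_group_add)"
proof (cases "l \<le> k")
  case True
  then have "int k - int l = int (k - l)"
    by simp
  then have "zsm (int k - int l) a = nsm (k - l) a"
    by (simp only: zsm_of_nat)
  also have "\<dots> = nsm k a - nsm l a"
    using True by (metis add_diff_cancel le_add_diff_inverse2 nsm_add_left)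
  finally show ?thesis .
next
  case False
  then have "int k - int l = - int (l - k)"
    by simp
  then have "zsm (int k - int l) a = - nsm (l - k) a"
    by (simp only: zsm_minus_of_nat)
  also have "\<dots> = nsm k a - nsm l a"
    using False by (metis add_diff_cancel_right' minus_diff_eq le_add_diff_inverse2 nle_le nsm_add_left)
  finally show ?thesis .
qed

lemma zsm_add_left: "zsm (c + d) a = zsm c a + zsm d (a::'a::ab_group_add)"
proof -
  obtain k l k' l' where c: "c = int k - int l" and d: "d = int k' - int l'"
    by (metis int_diff_cases)
  have "c + d = int (k + k') - int (l + l')" unfolding c d by simp
  then show ?thesis unfolding c d
    by (simp only: zsm_diff_of_nat nsm_add_left) (simp add: algebra_simps)
qed

lemma zsm_of_nat_mult: "zsm (int k * c) a = nsm k (zsm c (a::'a::ab_group_add))"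
proof -
  obtain l l' where c: "c = int l - int l'"
    by (metis int_diff_cases)
  have "int k * c = int (k * l) - int (k * l')" unfolding c by (simp add: algebra_simps)
  then show ?thesis unfolding c
    by (simp only: zsm_diff_of_nat nsm_diff_right nsm_nsm)
qed

lemma sgnpow_even [simp]: "even k \<Longrightarrow> sgnpow k a = a"
  by (simp add: sgnpow_def)

lemma sgnpow_Suc: "sgnpow (Suc k) a = - sgnpow k a"
  by (simp add: sgnpow_def)

lemma sgnpow_cong: "even j = even k \<Longrightarrow> sgnpow j a = sgnpow k a"
  by (simp add: sgnpow_def)

lemma sgnpow_sgnpow: "sgnpow j (sgnpow k a) = sgnpow (j + k) (a::'a::ab_group_add)"
  by (simp add: sgnpow_def)

lemma sgnpow_add: "sgnpow k (a + b) = sgnpow k a + sgnpow k (b::'a::ab_group_add)"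
  by (simp add: sgnpow_def)

lemma sgnpow_diff: "sgnpow k (a - b) = sgnpow k a - sgnpow k (b::'a::ab_group_add)"
  by (simp add: sgnpow_def)

lemma sgnpow_sum: "sgnpow k (\<Sum>i\<in>A. f i) = (\<Sum>i\<in>A. sgnpow k (f i :: 'a::ab_group_add))"
  by (simp add: sgnpow_def sum_negf)

lemma sgnpow_nsm: "sgnpow k (nsm j a) = nsm j (sgnpow k (a::'a::ab_group_add))"
  by (simp add: sgnpow_def nsm_minus_right)


section \<open>Multilinear cochains and block substitution\<close>

lemma hoch_cochain_add:
  "hoch_cochain n f \<Longrightarrow> length xs + length ys + 1 = n \<Longrightarrow>
   f (xs @ (u + v) # ys) = f (xs @ u # ys) + f (xs @ v # ys)"
  by (simp add: hoch_cochain_def)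

lemma hoch_cochain_zero:
  "hoch_cochain n f \<Longrightarrow> length xs + length ys + 1 = n \<Longrightarrow> f (xs @ 0 # ys) = 0"
  using hoch_cochain_add[of n f xs ys 0 0] by simp

lemma hoch_cochain_minus:
  "hoch_cochain n f \<Longrightarrow> length xs + length ys + 1 = n \<Longrightarrow> f (xs @ (- u) # ys) = - f (xs @ u # ys)"
  using hoch_cochain_add[of n f xs ys u "- u"] hoch_cochain_zero[of n f xs ys]
  by (simp add: eq_neg_iff_add_eq_0 add.commute)

lemma hoch_cochain_diff:
  "hoch_cochain n f \<Longrightarrow> length xs + length ys + 1 = n \<Longrightarrow>
   f (xs @ (u - v) # ys) = f (xs @ u # ys) - f (xs @ v # ys)"
  using hoch_cochain_add[of n f xs ys u "- v"] hoch_cochain_minus[of n f xs ys v] by simp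

lemma hoch_cochain_sum:
  "hoch_cochain n f \<Longrightarrow> length xs + length ys + 1 = n \<Longrightarrow>
   f (xs @ (\<Sum>i\<in>A. g i) # ys) = (\<Sum>i\<in>A. f (xs @ g i # ys))"
  by (induct A rule: infinite_finite_induct) (simp_all add: hoch_cochain_zero hoch_cochain_add)

lemma hoch_cochain_nsm:
  "hoch_cochain n f \<Longrightarrow> length xs + length ys + 1 = n \<Longrightarrow>
   f (xs @ nsm k u # ys) = nsm k (f (xs @ u # ys))"
  unfolding nsm_def by (rule hoch_cochain_sum)

lemma hoch_cochain_sgnpow:
  "hoch_cochain n f \<Longrightarrow> length xs + length ys + 1 = n \<Longrightarrow>
   f (xs @ sgnpow k u # ys) = sgnpow k (f (xs @ u # ys))"
  by (simp add: sgnpow_def hoch_cochain_minus)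

definition plug :: "nat \<Rightarrow> nat \<Rightarrow> ('a list \<Rightarrow> 'a) \<Rightarrow> 'a list \<Rightarrow> 'a list" where
  "plug i k g xs = take i xs @ g (take k (drop i xs)) # drop (i + k) xs"

lemma brace_eq_sum_plug: "brace m n f g xs = (\<Sum>i<m. sgnpow ((n + 1) * i) (f (plug i n g xs)))"
  by (simp add: brace_def plug_def)

lemma brace_odd_eq_sum_plug: "odd n \<Longrightarrow> brace m n f g xs = (\<Sum>i<m. f (plug i n g xs))"
  by (simp add: brace_eq_sum_plug)

lemma length_plug: "i + k \<le> length xs \<Longrightarrow> length (plug i k g xs) = length xs + 1 - k"
  by (simp add: plug_def)

lemma plug_append_before: "length xs < i \<Longrightarrow>
  plug i k g (xs @ w # ys) = xs @ w # plug (i - length xs - 1) k g ys"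
  by (simp add: plug_def take_Cons' drop_Cons')

lemma plug_append_inside: "i \<le> length xs \<Longrightarrow> length xs < i + k \<Longrightarrow> i + k \<le> length xs + 1 + length ys \<Longrightarrow>
  plug i k g (xs @ w # ys) =
    take i xs @ g (drop i xs @ w # take (i + k - length xs - 1) ys) # drop (i + k - length xs - 1) ys"
  by (simp add: plug_def take_Cons' drop_Cons' add.commute)

lemma plug_append_after: "i + k \<le> length xs \<Longrightarrow>
  plug i k g (xs @ w # ys) = take i xs @ g (take k (drop i xs)) # (drop (i + k) xs @ w # ys)"
  by (simp add: plug_def)

lemma hoch_cochain_plug_add:
  assumes f: "hoch_cochain m f" and g: "hoch_cochain n g" and i: "i < m"
    and len: "length xs + length ys + 1 + 1 = m + n"
  shows "f (plug i n g (xs @ (u + v) # ys)) = f (plug i n g (xs @ u # ys)) + f (plug i n g (xs @ v # ys))"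
proof -
  consider "length xs < i" | "i \<le> length xs" "length xs < i + n" | "i + n \<le> length xs"
    by linarith
  then show ?thesis
  proof cases
    case 1
    have "length (plug (i - length xs - 1) n g ys) = length ys + 1 - n"
      using 1 i len by (intro length_plug) linarith
    then show ?thesis unfolding plug_append_before[OF 1]
      by (intro hoch_cochain_add[OF f]) (use 1 i len in linarith)
  next
    case 2
    let ?ys = "take (i + n - length xs - 1) ys"
    have eq: "\<And>w. plug i n g (xs @ w # ys) = take i xs @ g (drop i xs @ w # ?ys) # drop (i + n - length xs - 1) ys"
      using 2 i len by (intro plug_append_inside) linarith+
    have "g (drop i xs @ (u + v) # ?ys) = g (drop i xs @ u # ?ys) + g (drop i xs @ v # ?ys)"
      by (rule hoch_cochain_add[OF g]) (use 2 i len in simp)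
    then show ?thesis unfolding eq
      by (simp only:) (rule hoch_cochain_add[OF f], use 2 i len in simp)
  next
    case 3
    show ?thesis unfolding plug_append_after[OF 3] append_Cons[symmetric] append_assoc[symmetric]
      by (rule hoch_cochain_add[OF f]) (use 3 i len in simp)
  qed
qed

lemma hoch_cochain_brace:
  assumes f: "hoch_cochain m f" and g: "hoch_cochain n g" and n: "1 \<le> n"
  shows "hoch_cochain (m + n - 1) (brace m n f g)"
  unfolding hoch_cochain_def
proof (intro allI impI)
  fix xs ys :: "'a list" and u v
  assume "length xs + length ys + 1 = m + n - 1"
  then have len: "length xs + length ys + 1 + 1 = m + n"
    using n by linarith
  show "brace m n f g (xs @ (u + v) # ys) = brace m n f g (xs @ u # ys) + brace m n f g (xs @ v # ys)"
    unfolding brace_eq_sum_plug sum.distrib[symmetric] sgnpow_add[symmetric]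
    by (rule sum.cong[OF refl]) (simp add: hoch_cochain_plug_add[OF f g _ len])
qed

definition cochain_eq :: "nat \<Rightarrow> ('a list \<Rightarrow> 'b) \<Rightarrow> ('a list \<Rightarrow> 'b) \<Rightarrow> bool" where
  "cochain_eq N f g \<longleftrightarrow> (\<forall>xs. length xs = N \<longrightarrow> f xs = g xs)"

lemma cochain_eqI: "(\<And>xs. length xs = N \<Longrightarrow> f xs = g xs) \<Longrightarrow> cochain_eq N f g"
  by (simp add: cochain_eq_def)

lemma brace_cong_left:
  "cochain_eq m f f' \<Longrightarrow> length xs + 1 = m + n \<Longrightarrow> brace m n f g xs = brace m n f' g xs"
  unfolding brace_eq_sum_plug cochain_eq_def
  by (intro sum.cong refl arg_cong[where f="sgnpow _"]) (auto simp: plug_def)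

lemma brace_cong_right:
  "cochain_eq n g g' \<Longrightarrow> length xs + 1 = m + n \<Longrightarrow> brace m n f g xs = brace m n f g' xs"
  unfolding brace_def cochain_eq_def
  by (intro sum.cong refl arg_cong[where f="sgnpow _"] arg_cong[where f=f]) auto

lemma brace_diff_left: "brace m n (\<lambda>ys. f1 ys - f2 ys) g xs = brace m n f1 g xs - brace m n f2 g xs"
  by (simp add: brace_eq_sum_plug sum_subtractf sgnpow_diff)

lemma brace_nsm_left: "brace m n (\<lambda>ys. nsm k (f ys)) g xs = nsm k (brace m n f g xs)"
  by (simp add: brace_eq_sum_plug sgnpow_nsm nsm_sum_right)

lemma brace_sum_left: "brace m n (\<lambda>ys. \<Sum>j\<in>A. h j ys) g xs = (\<Sum>j\<in>A. brace m n (h j) g xs)"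
  by (simp add: brace_eq_sum_plug sgnpow_sum flip: sum.swap[of _ A])

lemma
  assumes f: "hoch_cochain m f" and i: "i < m" and len: "length xs + 1 = m + n"
  shows hoch_cochain_plug_diff: "f (plug i n (\<lambda>ys. g1 ys - g2 ys) xs) = f (plug i n g1 xs) - f (plug i n g2 xs)"
    and hoch_cochain_plug_nsm: "f (plug i n (\<lambda>ys. nsm k (g ys)) xs) = nsm k (f (plug i n g xs))"
    and hoch_cochain_plug_sgnpow: "f (plug i n (\<lambda>ys. sgnpow k (g ys)) xs) = sgnpow k (f (plug i n g xs))"
    and hoch_cochain_plug_sum: "f (plug i n (\<lambda>ys. \<Sum>j\<in>A. h j ys) xs) = (\<Sum>j\<in>A. f (plug i n (h j) xs))"
  using i len unfolding plug_def
  by (auto intro!: hoch_cochain_diff[OF f] hoch_cochain_nsm[OF f] hoch_cochain_sgnpow[OF f] hoch_cochain_sum[OF f])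

lemma brace_diff_right:
  "hoch_cochain m f \<Longrightarrow> length xs + 1 = m + n \<Longrightarrow>
   brace m n f (\<lambda>ys. g1 ys - g2 ys) xs = brace m n f g1 xs - brace m n f g2 xs"
  by (simp add: brace_eq_sum_plug hoch_cochain_plug_diff sgnpow_diff sum_subtractf)

lemma brace_nsm_right:
  "hoch_cochain m f \<Longrightarrow> length xs + 1 = m + n \<Longrightarrow>
   brace m n f (\<lambda>ys. nsm k (g ys)) xs = nsm k (brace m n f g xs)"
  by (simp add: brace_eq_sum_plug hoch_cochain_plug_nsm sgnpow_nsm nsm_sum_right)


section \<open>The Leibniz rule and the pre-Lie identity\<close>

lemma sum_lessThan_add: "(\<Sum>i<a + (c::nat). h i) = (\<Sum>i<a. h i) + (\<Sum>i<c. h (a + i) :: 'b::comm_monoid_add)"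
  by (induction c) (simp_all add: add.assoc)

lemma take_plug_less: "i < a \<Longrightarrow> a + k \<le> length xs + 1 \<Longrightarrow> 1 \<le> k \<Longrightarrow>
   take a (plug i k g xs) = plug i k g (take (a + k - 1) xs)"
  by (auto simp: plug_def take_Cons' min_def drop_take)

lemma drop_plug_less: "i < a \<Longrightarrow> a + k \<le> length xs + 1 \<Longrightarrow> 1 \<le> k \<Longrightarrow>
   drop a (plug i k g xs) = drop (a + k - 1) xs"
  by (simp add: plug_def drop_Cons')

lemma take_plug_ge: "a \<le> length xs \<Longrightarrow> take a (plug (a + j) k g xs) = take a xs"
  by (simp add: plug_def min_def)

lemma drop_plug_ge: "a \<le> length xs \<Longrightarrow> drop a (plug (a + j) k g xs) = plug j k g (drop a xs)"
  by (simp add: plug_def drop_take add_ac)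

lemma brace_cup:
  assumes n: "odd n" and len: "length xs + 1 = a + c + n"
  shows "brace (a + c) n (cup a f g) x xs =
         cup (a + n - 1) (brace a n f x) g xs + cup a f (brace c n g x) xs"
proof -
  have "1 \<le> n"
    using n by (cases n) auto
  then have "(\<Sum>i<a. cup a f g (plug i n x xs)) = cup (a + n - 1) (brace a n f x) g xs"
    and "(\<Sum>i<c. cup a f g (plug (a + i) n x xs)) = cup a f (brace c n g x) xs"
    using len n by (simp_all add: cup_def brace_odd_eq_sum_plug sum_distrib_left sum_distrib_right
        take_plug_less drop_plug_less take_plug_ge drop_plug_ge)
  then show ?thesis
    using n by (simp add: brace_odd_eq_sum_plug sum_lessThan_add)
qed

definition plug2 :: "nat \<Rightarrow> nat \<Rightarrow> ('a list \<Rightarrow> 'a) \<Rightarrow> nat \<Rightarrow> nat \<Rightarrow> ('a list \<Rightarrow> 'a) \<Rightarrow> 'a list \<Rightarrow> 'a list" where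
  "plug2 i k g j l h xs = take i xs @ g (take k (drop i xs)) # take (j - i - k) (drop (i + k) xs)
      @ h (take l (drop j xs)) # drop (j + l) xs"

lemma plug_plug_before: "i + k \<le> j \<Longrightarrow> j + l \<le> length xs \<Longrightarrow>
   plug i k g (plug j l h xs) = plug2 i k g j l h xs"
  by (simp add: plug_def plug2_def drop_take)

lemma plug_plug_after: "j < i \<Longrightarrow> i + k + l \<le> length xs + 1 \<Longrightarrow>
   plug i k g (plug j l h xs) = plug2 j l h (i + l - 1) k g xs"
  by (simp add: plug_def plug2_def take_Cons' drop_Cons' drop_take add_ac)

lemma plug_plug_nested: "i \<le> j \<Longrightarrow> j < i + k \<Longrightarrow> i + k + l \<le> length xs + 1 \<Longrightarrow>
   plug i k g (plug j l h xs) = plug i (k + l - 1) (\<lambda>ys. g (plug (j - i) l h ys)) xs"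
  by (simp add: plug_def take_Cons' drop_Cons' drop_take add_ac)

(* The two-argument brace z{g,h}: g and h fill disjoint blocks of xs, g's block first. *)
definition brace2 :: "nat \<Rightarrow> ('a list \<Rightarrow> 'a::ring) \<Rightarrow> nat \<Rightarrow> ('a list \<Rightarrow> 'a) \<Rightarrow> nat \<Rightarrow> ('a list \<Rightarrow> 'a) \<Rightarrow> 'a list \<Rightarrow> 'a" where
  "brace2 a z k g l h xs =
     (\<Sum>(i, j)\<in>{(i, j). i + k \<le> j \<and> j < a + k - 1}. sgnpow ((k + 1) * i + (l + 1) * j) (z (plug2 i k g j l h xs)))"

lemma brace_brace_nested:
  assumes z: "hoch_cochain a z" and k: "1 \<le> k1" "1 \<le> k2" and len: "length xs + 2 = a + k1 + k2"
  shows "(\<Sum>(j, i)\<in>{(j, i). i < a \<and> i \<le> j \<and> j < i + k1}.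
            sgnpow ((k2 + 1) * j + (k1 + 1) * i) (z (plug i k1 g (plug j k2 h xs))))
       = brace a (k1 + k2 - 1) z (brace k1 k2 g h) xs"
proof -
  let ?K = "k1 + k2 - 1"
  have len': "length xs + 1 = a + ?K"
    using len k by linarith
  have "brace a ?K z (brace k1 k2 g h) xs =
      (\<Sum>i<a. \<Sum>l<k1. sgnpow ((?K + 1) * i + (k2 + 1) * l) (z (plug i ?K (\<lambda>ys. g (plug l k2 h ys)) xs)))"
    unfolding brace_eq_sum_plug[of a] brace_def[of k1] plug_def[symmetric]
    by (intro sum.cong refl)
      (simp only: lessThan_iff hoch_cochain_plug_sum[OF z _ len'] hoch_cochain_plug_sgnpow[OF z _ len']
        sgnpow_sum sgnpow_sgnpow)
  also have "\<dots> = (\<Sum>(i, l)\<in>{..<a} \<times> {..<k1}. sgnpow ((?K + 1) * i + (k2 + 1) * l) (z (plug i ?K (\<lambda>ys. g (plug l k2 h ys)) xs)))"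
    by (rule sum.cartesian_product)
  also have "\<dots> = (\<Sum>(j, i)\<in>{(j, i). i < a \<and> i \<le> j \<and> j < i + k1}.
            sgnpow ((k2 + 1) * j + (k1 + 1) * i) (z (plug i k1 g (plug j k2 h xs))))"
  proof (rule sum.reindex_bij_witness[where i="\<lambda>(j, i). (i, j - i)" and j="\<lambda>(i, l). (i + l, i)"])
    fix p assume "p \<in> {..<a} \<times> {..<k1}"
    then obtain i l where p: "p = (i, l)" "i < a" "l < k1"
      by auto
    have "plug i k1 g (plug (i + l) k2 h xs) = plug i ?K (\<lambda>ys. g (plug l k2 h ys)) xs"
      using plug_plug_nested[of i "i + l" k1 k2 xs g h] p len by simp
    moreover have "even ((k2 + 1) * (i + l) + (k1 + 1) * i) = even ((?K + 1) * i + (k2 + 1) * l)"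
    proof -
      have "(k2 + 1) * (i + l) + (k1 + 1) * i = (?K + 1) * i + (k2 + 1) * l + 2 * i"
        using k by (simp add: algebra_simps)
      then show ?thesis
        by (simp only: even_add even_mult_iff even_numeral simp_thms)
    qed
    ultimately show "(case (case p of (i, l) \<Rightarrow> (i + l, i)) of
        (j, i) \<Rightarrow> sgnpow ((k2 + 1) * j + (k1 + 1) * i) (z (plug i k1 g (plug j k2 h xs)))) =
      (case p of (i, l) \<Rightarrow> sgnpow ((?K + 1) * i + (k2 + 1) * l) (z (plug i ?K (\<lambda>ys. g (plug l k2 h ys)) xs)))"
      unfolding p prod.case by (metis sgnpow_cong)
  qed auto
  finally show ?thesis
    by simp
qed

lemma brace_brace_split:
  assumes z: "hoch_cochain a z" and k: "1 \<le> k1" "1 \<le> k2" and len: "length xs + 2 = a + k1 + k2"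
  shows "brace (a + k1 - 1) k2 (brace a k1 z g) h xs =
     brace a (k1 + k2 - 1) z (brace k1 k2 g h) xs + brace2 a z k1 g k2 h xs
     + sgnpow ((k1 + 1) * (k2 - 1)) (brace2 a z k2 h k1 g xs)"
proof -
  define F where "F = (\<lambda>(j, i). sgnpow ((k2 + 1) * j + (k1 + 1) * i) (z (plug i k1 g (plug j k2 h xs))))"
  define IN where "IN = {(j, i). i < a \<and> i \<le> j \<and> j < i + k1}"
  define LT where "LT = {(j, i). j < i \<and> i < a}"
  define GT where "GT = {(j, i). i < a \<and> i + k1 \<le> j \<and> j < a + k1 - 1}"
  have B: "finite ({..<a + k1} \<times> {..<a})"
    by simp
  have fin: "finite IN" "finite LT" "finite GT"
    unfolding IN_def LT_def GT_def by (auto intro: finite_subset[OF _ B])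
  have split: "{..<a + k1 - 1} \<times> {..<a} = IN \<union> LT \<union> GT"
    unfolding IN_def LT_def GT_def using k by auto
  have "brace (a + k1 - 1) k2 (brace a k1 z g) h xs = sum F ({..<a + k1 - 1} \<times> {..<a})"
    unfolding brace_eq_sum_plug F_def by (simp add: sgnpow_sum sgnpow_sgnpow sum.cartesian_product)
  also have "\<dots> = sum F IN + sum F LT + sum F GT"
    unfolding split using fin by (subst sum.union_disjoint; auto simp: IN_def LT_def GT_def)+
  also have "sum F IN = brace a (k1 + k2 - 1) z (brace k1 k2 g h) xs"
    unfolding F_def IN_def by (rule brace_brace_nested[OF z k len])
  also have "sum F GT = brace2 a z k1 g k2 h xs"
    unfolding brace2_def
  proof (rule sum.reindex_bij_witness[where i="\<lambda>(i, j). (j, i)" and j="\<lambda>(j, i). (i, j)"])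
    fix p assume "p \<in> GT"
    then obtain j i where "p = (j, i)" "i < a" "i + k1 \<le> j" "j < a + k1 - 1"
      unfolding GT_def by auto
    then show "(case (case p of (j, i) \<Rightarrow> (i, j)) of
        (i, j) \<Rightarrow> sgnpow ((k1 + 1) * i + (k2 + 1) * j) (z (plug2 i k1 g j k2 h xs))) = F p"
      using len by (simp add: F_def plug_plug_before add.commute)
  qed (auto simp: GT_def)
  also have "sum F LT = sgnpow ((k1 + 1) * (k2 - 1)) (brace2 a z k2 h k1 g xs)"
    unfolding brace2_def sgnpow_sum
  proof (rule sum.reindex_bij_witness[where i="\<lambda>(j, i). (j, i + 1 - k2)" and j="\<lambda>(j, i). (j, i + k2 - 1)"])
    fix p assume "p \<in> LT"
    then obtain j i where p: "p = (j, i)" "j < i" "i < a"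
      unfolding LT_def by auto
    obtain k' where "k2 = Suc k'"
      using k by (cases k2) auto
    then have "(k1 + 1) * (k2 - 1) + ((k2 + 1) * j + (k1 + 1) * (i + k2 - 1)) =
        (k2 + 1) * j + (k1 + 1) * i + 2 * ((k1 + 1) * (k2 - 1))"
      by (simp add: algebra_simps)
    then have "even ((k1 + 1) * (k2 - 1) + ((k2 + 1) * j + (k1 + 1) * (i + k2 - 1))) =
        even ((k2 + 1) * j + (k1 + 1) * i)"
      by (simp only: even_add even_mult_iff even_numeral simp_thms)
    moreover have "plug i k1 g (plug j k2 h xs) = plug2 j k2 h (i + k2 - 1) k1 g xs"
      using p len by (intro plug_plug_after) simp_all
    ultimately show "sgnpow ((k1 + 1) * (k2 - 1)) (case (case p of (j, i) \<Rightarrow> (j, i + k2 - 1)) of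
        (i, j) \<Rightarrow> sgnpow ((k2 + 1) * i + (k1 + 1) * j) (z (plug2 i k2 h j k1 g xs))) = F p"
      unfolding F_def p(1) prod.case sgnpow_sgnpow by (metis sgnpow_cong)
  qed (use k in \<open>auto simp: LT_def\<close>)
  finally show ?thesis
    by (simp add: algebra_simps)
qed

(* For odd n the signs in brace_brace_split vanish, and both sides become brace2 a z n x m y + brace2 a z m y n x. *)
lemma brace_pre_lie:
  assumes z: "hoch_cochain a z" and n: "odd n" and m: "1 \<le> m" and len: "length xs + 2 = a + n + m"
  shows "brace (a + n - 1) m (brace a n z x) y xs - brace a (n + m - 1) z (brace n m x y) xs =
         brace (a + m - 1) n (brace a m z y) x xs - brace a (m + n - 1) z (brace m n y x) xs"
proof -
  have n1: "1 \<le> n"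
    using odd_pos[OF n] by simp
  have "length xs + 2 = a + m + n"
    using len by simp
  moreover have "even ((n + 1) * (m - 1))" and "even ((m + 1) * (n - 1))"
    using n n1 by simp_all
  ultimately show ?thesis
    using brace_brace_split[OF z n1 m len, of x y] brace_brace_split[OF z m n1, of xs y x]
    by (simp add: algebra_simps)
qed


section \<open>The homotopy formula\<close>

definition face :: "nat \<Rightarrow> 'a::ring list \<Rightarrow> 'a list" where
  "face k xs = take (k - 1) xs @ (xs ! (k - 1) * xs ! k) # drop (k + 1) xs"

lemma hdiff_eq_sum_face: "hdiff N F xs = xs ! 0 * F (drop 1 xs) + (\<Sum>k\<in>{1..N}. sgnpow k (F (face k xs)))
    + sgnpow (N + 1) (F (take N xs) * xs ! N)"
  by (simp add: hdiff_def face_def)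

lemma plug_Suc_nth_drop: "1 \<le> i \<Longrightarrow> i + n \<le> length xs \<Longrightarrow>
   plug i n g xs ! 0 = xs ! 0 \<and> drop 1 (plug i n g xs) = plug (i - 1) n g (drop 1 xs)"
  by (cases xs; cases i) (auto simp: plug_def)

lemma nth_plug_less: "i < m \<Longrightarrow> length xs = m + n \<Longrightarrow> 1 \<le> n \<Longrightarrow>
   plug i n g xs ! m = xs ! (m + n - 1)"
  by (simp add: plug_def nth_append add.commute)

lemma plug_at_end: "length xs = m + n \<Longrightarrow>
   take m (plug m n g xs) = take m xs \<and> plug m n g xs ! m = g (drop m xs)"
  by (simp add: plug_def nth_append)

lemma face_plug_before: "1 \<le> k \<Longrightarrow> k < i \<Longrightarrow> i + n \<le> length xs \<Longrightarrow>
   face k (plug i n g xs) = plug (i - 1) n g (face k xs)"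
  by (auto simp: face_def plug_def nth_append min_def take_Cons' drop_Cons' drop_take add_ac)

lemma face_plug_after: "i + 2 \<le> k \<Longrightarrow> k \<le> m \<Longrightarrow> length xs = m + n \<Longrightarrow> 1 \<le> n \<Longrightarrow>
   face k (plug i n g xs) = plug i n g (face (k + n - 1) xs)"
  by (auto simp: face_def plug_def nth_append min_def take_Cons' drop_Cons' drop_take add_ac numeral_2_eq_2)

lemma plug_face_inside: "1 \<le> k \<Longrightarrow> k \<le> n \<Longrightarrow> i + n + 1 \<le> length xs \<Longrightarrow>
   plug i n g (face (i + k) xs) = take i xs @ g (face k (take (n + 1) (drop i xs))) # drop (i + n + 1) xs"
  by (auto simp: face_def plug_def nth_append min_def take_Cons' drop_Cons' drop_take add_ac)

lemma face_plug_left_end: "i + 1 + n \<le> length xs \<Longrightarrow>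
   face (i + 1) (plug (i + 1) n g xs) = take i xs @ (xs ! i * g (take n (drop (i + 1) xs))) # drop (i + 1 + n) xs"
  by (simp add: face_def plug_def nth_append min_def take_Cons' drop_Cons' drop_take add_ac)

lemma face_plug_right_end: "i + n + 1 \<le> length xs \<Longrightarrow>
   face (i + 1) (plug i n g xs) = take i xs @ (g (take n (drop i xs)) * xs ! (i + n)) # drop (i + n + 1) xs"
  by (simp add: face_def plug_def nth_append min_def take_Cons' drop_Cons' drop_take add_ac)

lemma hdiff_brace_expand:
  assumes m: "odd m" and n: "odd n"
  shows "hdiff (m + n - 1) (brace m n f g) xs =
     xs ! 0 * (\<Sum>i<m. f (plug i n g (drop 1 xs)))
   + (\<Sum>(K, i)\<in>{1..m + n - 1} \<times> {..<m}. sgnpow K (f (plug i n g (face K xs))))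
   + (\<Sum>i<m. f (plug i n g (take (m + n - 1) xs))) * xs ! (m + n - 1)"
proof -
  have ev: "\<And>i. even ((n + 1) * i)" using n by simp
  have ev2: "even (m + n - 1 + 1)" using m n by (cases m) auto
  show ?thesis unfolding hdiff_eq_sum_face brace_eq_sum_plug using ev ev2
    by (simp add: sgnpow_sum sum.cartesian_product)
qed

lemma brace_hdiff_left_expand:
  assumes m: "odd m" and n: "odd n" and len: "length xs = m + n"
  shows "brace (m + 1) n (hdiff m f) g xs =
     cup n g f xs + xs ! 0 * (\<Sum>i<m. f (plug i n g (drop 1 xs)))
   + (\<Sum>(i, k)\<in>{..<m + 1} \<times> {1..m}. sgnpow k (f (face k (plug i n g xs))))
   + (\<Sum>i<m. f (plug i n g (take (m + n - 1) xs))) * xs ! (m + n - 1) + cup m f g xs"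
proof -
  have ev: "\<And>i. even ((n + 1) * i)" using n by simp
  have ev2: "even (m + 1)" using m by simp
  have n1: "1 \<le> n"
    using odd_pos[OF n] by simp
  define A where "A = (\<lambda>i. plug i n g xs ! 0 * f (drop 1 (plug i n g xs)))"
  define C where "C = (\<lambda>i. f (take m (plug i n g xs)) * plug i n g xs ! m)"
  have "brace (m + 1) n (hdiff m f) g xs = (\<Sum>i<m + 1. A i + (\<Sum>k\<in>{1..m}. sgnpow k (f (face k (plug i n g xs)))) + C i)"
    unfolding brace_eq_sum_plug hdiff_eq_sum_face A_def C_def using ev ev2 by simp
  also have "\<dots> = (\<Sum>i<m + 1. A i) + (\<Sum>(i, k)\<in>{..<m + 1} \<times> {1..m}. sgnpow k (f (face k (plug i n g xs)))) + (\<Sum>i<m + 1. C i)"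
    by (simp add: sum.distrib sum.cartesian_product)
  also have "(\<Sum>i<m + 1. A i) = cup n g f xs + xs ! 0 * (\<Sum>i<m. f (plug i n g (drop 1 xs)))"
  proof -
    have "(\<Sum>i<m + 1. A i) = A 0 + (\<Sum>i<m. A (Suc i))" by (simp add: sum.lessThan_Suc_shift del: sum.lessThan_Suc)
    moreover have "A 0 = cup n g f xs" using n1 len by (simp add: A_def cup_def plug_def)
    moreover have "A (Suc i) = xs ! 0 * f (plug i n g (drop 1 xs))" if "i < m" for i
      using plug_Suc_nth_drop[of "Suc i" n xs g] that len by (simp add: A_def)
    ultimately show ?thesis by (simp add: sum_distrib_left)
  qed
  also have "(\<Sum>i<m + 1. C i) = (\<Sum>i<m. f (plug i n g (take (m + n - 1) xs))) * xs ! (m + n - 1) + cup m f g xs"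
  proof -
    have "(\<Sum>i<m + 1. C i) = (\<Sum>i<m. C i) + C m" by simp
    moreover have "C m = cup m f g xs" using plug_at_end[OF len, of g] by (simp add: C_def cup_def)
    moreover have "C i = f (plug i n g (take (m + n - 1) xs)) * xs ! (m + n - 1)" if "i < m" for i
      using take_plug_less[of i m n xs g] nth_plug_less[OF that len n1, of g] that len n1 by (simp add: C_def)
    ultimately show ?thesis by (simp add: sum_distrib_right)
  qed
  finally show ?thesis by (simp add: add.assoc)
qed

lemma brace_hdiff_right_expand:
  assumes f: "hoch_cochain m f" and m: "odd m" and n: "odd n" and len: "length xs = m + n"
  shows "brace m (n + 1) f (hdiff n g) xs =
     (\<Sum>i<m. sgnpow i (f (take i xs @ (xs ! i * g (take n (drop (i + 1) xs))) # drop (i + 1 + n) xs)))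
   + (\<Sum>(i, k)\<in>{..<m} \<times> {1..n}. sgnpow i (sgnpow k (f (take i xs @ g (face k (take (n + 1) (drop i xs))) # drop (i + n + 1) xs))))
   + (\<Sum>i<m. sgnpow i (f (take i xs @ (g (take n (drop i xs)) * xs ! (i + n)) # drop (i + n + 1) xs)))"
proof -
  have par: "\<And>i. even ((n + 1 + 1) * i) = even i" using n by simp
  have ev2: "even (n + 1)" using n by simp
  have "brace m (n + 1) f (hdiff n g) xs =
      (\<Sum>i<m. sgnpow i (f (take i xs @ hdiff n g (take (n + 1) (drop i xs)) # drop (i + (n + 1)) xs)))"
    unfolding brace_def by (intro sum.cong refl) (simp only: sgnpow_cong[OF par])
  also have "\<dots> = (\<Sum>i<m. sgnpow i (f (take i xs @ (xs ! i * g (take n (drop (i + 1) xs))) # drop (i + 1 + n) xs)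
      + (\<Sum>k\<in>{1..n}. sgnpow k (f (take i xs @ g (face k (take (n + 1) (drop i xs))) # drop (i + n + 1) xs)))
      + f (take i xs @ (g (take n (drop i xs)) * xs ! (i + n)) # drop (i + n + 1) xs)))"
  proof (intro sum.cong refl arg_cong[where f="sgnpow _"])
    fix i assume i: "i \<in> {..<m}"
    let ?c = "take (n + 1) (drop i xs)"
    have l: "length (take i xs) + length (drop (i + (n + 1)) xs) + 1 = m" using i len by auto
    have c0: "?c ! 0 = xs ! i" using i len by simp
    have c1: "drop 1 ?c = take n (drop (i + 1) xs)" using i len by (simp add: drop_take)
    have c2: "take n ?c = take n (drop i xs)" by simp
    have c3: "?c ! n = xs ! (i + n)" using i len by simp
    have e: "i + (n + 1) = i + 1 + n" "i + (n + 1) = i + n + 1" by simp_all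
    have "hdiff n g ?c = ?c ! 0 * g (drop 1 ?c) + (\<Sum>k\<in>{1..n}. sgnpow k (g (face k ?c))) + g (take n ?c) * ?c ! n"
      unfolding hdiff_eq_sum_face using ev2 by simp
    note hd = this[unfolded c0 c1 c2 c3]
    have "f (take i xs @ hdiff n g ?c # drop (i + (n + 1)) xs) =
      f (take i xs @ (xs ! i * g (take n (drop (i + 1) xs))) # drop (i + (n + 1)) xs)
      + (\<Sum>k\<in>{1..n}. sgnpow k (f (take i xs @ g (face k ?c) # drop (i + (n + 1)) xs)))
      + f (take i xs @ (g (take n (drop i xs)) * xs ! (i + n)) # drop (i + (n + 1)) xs)"
      unfolding hd by (simp only: hoch_cochain_add[OF f l] hoch_cochain_sum[OF f l] hoch_cochain_sgnpow[OF f l])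
    then show "f (take i xs @ hdiff n g ?c # drop (i + (n + 1)) xs) =
      f (take i xs @ (xs ! i * g (take n (drop (i + 1) xs))) # drop (i + 1 + n) xs)
      + (\<Sum>k\<in>{1..n}. sgnpow k (f (take i xs @ g (face k ?c) # drop (i + n + 1) xs)))
      + f (take i xs @ (g (take n (drop i xs)) * xs ! (i + n)) # drop (i + n + 1) xs)"
      by (simp only: e(1)[symmetric] e(2)[symmetric])
  qed
  also have "\<dots> = (\<Sum>i<m. sgnpow i (f (take i xs @ (xs ! i * g (take n (drop (i + 1) xs))) # drop (i + 1 + n) xs)))
   + (\<Sum>(i, k)\<in>{..<m} \<times> {1..n}. sgnpow i (sgnpow k (f (take i xs @ g (face k (take (n + 1) (drop i xs))) # drop (i + n + 1) xs))))
   + (\<Sum>i<m. sgnpow i (f (take i xs @ (g (take n (drop i xs)) * xs ! (i + n)) # drop (i + n + 1) xs)))"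
    by (simp add: sum.distrib sgnpow_add sgnpow_sum sum.cartesian_product)
  finally show ?thesis .
qed

lemma sum_face_plug_split:
  assumes n: "odd n" and len: "length xs = m + n"
  shows "(\<Sum>(i, k)\<in>{..<m + 1} \<times> {1..m}. sgnpow k (f (face k (plug i n g xs)))) =
      (\<Sum>(K, i)\<in>{(K, i). 1 \<le> K \<and> K \<le> i \<and> i < m}. sgnpow K (f (plug i n g (face K xs))))
    + (\<Sum>(K, i)\<in>{(K, i). i < m \<and> i + n + 1 \<le> K \<and> K \<le> m + n - 1}. sgnpow K (f (plug i n g (face K xs))))
    - (\<Sum>i<m. sgnpow i (f (take i xs @ (xs ! i * g (take n (drop (i + 1) xs))) # drop (i + 1 + n) xs)))
    - (\<Sum>i<m. sgnpow i (f (take i xs @ (g (take n (drop i xs)) * xs ! (i + n)) # drop (i + n + 1) xs)))"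
proof -
  have n1: "1 \<le> n"
    using odd_pos[OF n] by simp
  define FB where "FB = (\<lambda>(i, k). sgnpow k (f (face k (plug i n g xs))))"
  define FT where "FT = (\<lambda>(K, i). sgnpow K (f (plug i n g (face K xs))))"
  define Plt where "Plt = {(i, k). 1 \<le> k \<and> k < i \<and> i \<le> m}"
  define Peq where "Peq = {(i, k). k = i \<and> 1 \<le> i \<and> i \<le> m}"
  define Peq1 where "Peq1 = {(i, k). k = i + 1 \<and> i < m}"
  define Pgt where "Pgt = {(i, k). i + 2 \<le> k \<and> k \<le> m}"
  have B: "finite ({..m + 1} \<times> {..m + 1})"
    by simp
  have fin: "finite Plt" "finite Peq" "finite Peq1" "finite Pgt"
    unfolding Plt_def Peq_def Peq1_def Pgt_def by (auto intro: finite_subset[OF _ B])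
  have split: "{..<m + 1} \<times> {1..m} = Plt \<union> Peq \<union> Peq1 \<union> Pgt"
    unfolding Plt_def Peq_def Peq1_def Pgt_def by auto
  have S: "sum FB ({..<m + 1} \<times> {1..m}) = sum FB Plt + sum FB Peq + sum FB Peq1 + sum FB Pgt"
    unfolding split using fin by (subst sum.union_disjoint; auto simp: Plt_def Peq_def Peq1_def Pgt_def)+
  have "sum FB Peq = (\<Sum>i<m. FB (i + 1, i + 1))"
    by (rule sum.reindex_bij_witness[where i="\<lambda>i. (i + 1, i + 1)" and j="\<lambda>(i, k). k - 1"]) (auto simp: Peq_def)
  also have "\<dots> = - (\<Sum>i<m. sgnpow i (f (take i xs @ (xs ! i * g (take n (drop (i + 1) xs))) # drop (i + 1 + n) xs)))"
    unfolding sum_negf[symmetric]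
  proof (intro sum.cong refl)
    fix i assume "i \<in> {..<m}"
    then have "face (i + 1) (plug (i + 1) n g xs) = take i xs @ (xs ! i * g (take n (drop (i + 1) xs))) # drop (i + 1 + n) xs"
      using len by (intro face_plug_left_end) simp
    then show "FB (i + 1, i + 1) = - sgnpow i (f (take i xs @ (xs ! i * g (take n (drop (i + 1) xs))) # drop (i + 1 + n) xs))"
      by (simp add: FB_def sgnpow_Suc)
  qed
  finally have Seq: "sum FB Peq = \<dots>" .
  have "sum FB Peq1 = (\<Sum>i<m. FB (i, i + 1))"
    by (rule sum.reindex_bij_witness[where i="\<lambda>i. (i, i + 1)" and j="\<lambda>(i, k). i"]) (auto simp: Peq1_def)
  also have "\<dots> = - (\<Sum>i<m. sgnpow i (f (take i xs @ (g (take n (drop i xs)) * xs ! (i + n)) # drop (i + n + 1) xs)))"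
    unfolding sum_negf[symmetric]
  proof (intro sum.cong refl)
    fix i assume "i \<in> {..<m}"
    then have "face (i + 1) (plug i n g xs) = take i xs @ (g (take n (drop i xs)) * xs ! (i + n)) # drop (i + n + 1) xs"
      using len by (intro face_plug_right_end) simp
    then show "FB (i, i + 1) = - sgnpow i (f (take i xs @ (g (take n (drop i xs)) * xs ! (i + n)) # drop (i + n + 1) xs))"
      by (simp add: FB_def sgnpow_Suc)
  qed
  finally have Seq1: "sum FB Peq1 = \<dots>" .
  have Slt: "sum FT {(K, i). 1 \<le> K \<and> K \<le> i \<and> i < m} = sum FB Plt"
  proof (rule sum.reindex_bij_witness[where i="\<lambda>(i, k). (k, i - 1)" and j="\<lambda>(K, i). (i + 1, K)"])
    fix p assume "p \<in> {(K, i). 1 \<le> K \<and> K \<le> i \<and> i < m}"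
    then obtain K i where p: "p = (K, i)" "1 \<le> K" "K \<le> i" "i < m"
      by auto
    have "face K (plug (i + 1) n g xs) = plug i n g (face K xs)"
      using face_plug_before[of K "i + 1" n xs g] p len by simp
    then show "FB (case p of (K, i) \<Rightarrow> (i + 1, K)) = FT p"
      unfolding p(1) FB_def FT_def by simp
  qed (auto simp: Plt_def)
  have Sgt: "sum FT {(K, i). i < m \<and> i + n + 1 \<le> K \<and> K \<le> m + n - 1} = sum FB Pgt"
  proof (rule sum.reindex_bij_witness[where i="\<lambda>(i, k). (k + n - 1, i)" and j="\<lambda>(K, i). (i, K - n + 1)"])
    fix p assume "p \<in> {(K, i). i < m \<and> i + n + 1 \<le> K \<and> K \<le> m + n - 1}"
    then obtain K i where p: "p = (K, i)" "i < m" "i + n + 1 \<le> K" "K \<le> m + n - 1"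
      by auto
    have K: "K - n + 1 + n - 1 = K"
      using p n1 by simp
    have "face (K - n + 1) (plug i n g xs) = plug i n g (face (K - n + 1 + n - 1) xs)"
      by (rule face_plug_after) (use p len n1 in simp_all)
    then have face: "face (K - n + 1) (plug i n g xs) = plug i n g (face K xs)"
      unfolding K .
    have "even (K - n + 1) = even K"
    proof -
      have "K = (K - n + 1) + (n - 1)"
        using p n1 by simp
      moreover have "even (n - 1)"
        using n n1 by simp
      ultimately show ?thesis
        by (metis even_add)
    qed
    then show "FB (case p of (K, i) \<Rightarrow> (i, K - n + 1)) = FT p"
      unfolding p(1) FB_def FT_def prod.case face by (rule sgnpow_cong)
  qed (use n1 in \<open>auto simp: Pgt_def\<close>)
  show ?thesis
    unfolding FB_def[symmetric] FT_def[symmetric] S Seq Seq1 Slt Sgt by (simp add: algebra_simps)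
qed

lemma sum_plug_face_split:
  assumes n: "odd n" and len: "length xs = m + n"
  shows "(\<Sum>(K, i)\<in>{1..m + n - 1} \<times> {..<m}. sgnpow K (f (plug i n g (face K xs)))) =
      (\<Sum>(K, i)\<in>{(K, i). 1 \<le> K \<and> K \<le> i \<and> i < m}. sgnpow K (f (plug i n g (face K xs))))
    + (\<Sum>(K, i)\<in>{(K, i). i < m \<and> i + n + 1 \<le> K \<and> K \<le> m + n - 1}. sgnpow K (f (plug i n g (face K xs))))
    + (\<Sum>(i, k)\<in>{..<m} \<times> {1..n}. sgnpow i (sgnpow k (f (take i xs @ g (face k (take (n + 1) (drop i xs))) # drop (i + n + 1) xs))))"
proof -
  have n1: "1 \<le> n"
    using odd_pos[OF n] by simp
  define FT where "FT = (\<lambda>(K, i). sgnpow K (f (plug i n g (face K xs))))"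
  define Qlt where "Qlt = {(K, i). 1 \<le> K \<and> K \<le> i \<and> i < m}"
  define Qgt where "Qgt = {(K, i). i < m \<and> i + n + 1 \<le> K \<and> K \<le> m + n - 1}"
  define Qin where "Qin = {(K, i). i < m \<and> i + 1 \<le> K \<and> K \<le> i + n}"
  have B: "finite ({..m + n} \<times> {..m})"
    by simp
  have fin: "finite Qlt" "finite Qgt" "finite Qin"
    unfolding Qlt_def Qgt_def Qin_def by (auto intro: finite_subset[OF _ B])
  have split: "{1..m + n - 1} \<times> {..<m} = Qlt \<union> Qgt \<union> Qin"
    unfolding Qlt_def Qgt_def Qin_def using n1 by auto
  have S: "sum FT ({1..m + n - 1} \<times> {..<m}) = sum FT Qlt + sum FT Qgt + sum FT Qin"
    unfolding split using fin by (subst sum.union_disjoint; auto simp: Qlt_def Qgt_def Qin_def)+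
  have "sum FT Qin = (\<Sum>(i, k)\<in>{..<m} \<times> {1..n}.
      sgnpow i (sgnpow k (f (take i xs @ g (face k (take (n + 1) (drop i xs))) # drop (i + n + 1) xs))))"
  proof (rule sum.reindex_bij_witness[where i="\<lambda>(i, k). (i + k, i)" and j="\<lambda>(K, i). (i, K - i)"])
    fix p assume "p \<in> Qin"
    then obtain K i where p: "p = (K, i)" "i < m" "i + 1 \<le> K" "K \<le> i + n"
      unfolding Qin_def by auto
    then have K: "i + (K - i) = K"
      by simp
    have "plug i n g (face (i + (K - i)) xs) =
        take i xs @ g (face (K - i) (take (n + 1) (drop i xs))) # drop (i + n + 1) xs"
      by (rule plug_face_inside) (use p len in simp_all)
    then show "(case (case p of (K, i) \<Rightarrow> (i, K - i)) of
        (i, k) \<Rightarrow> sgnpow i (sgnpow k (f (take i xs @ g (face k (take (n + 1) (drop i xs))) # drop (i + n + 1) xs)))) = FT p"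
      unfolding p(1) FT_def prod.case sgnpow_sgnpow K by simp
  qed (auto simp: Qin_def)
  then show ?thesis
    unfolding FT_def[symmetric] Qlt_def[symmetric] Qgt_def[symmetric] S by simp
qed

lemma hdiff_brace:
  assumes f: "hoch_cochain m f" and m: "odd m" and n: "odd n" and len: "length xs = m + n"
  shows "hdiff (m + n - 1) (brace m n f g) xs =
     brace (m + 1) n (hdiff m f) g xs + brace m (n + 1) f (hdiff n g) xs - cup m f g xs - cup n g f xs"
  unfolding hdiff_brace_expand[OF m n] brace_hdiff_left_expand[OF m n len]
    brace_hdiff_right_expand[OF f m n len] sum_face_plug_split[OF n len] sum_plug_face_split[OF n len]
  by (simp add: algebra_simps)


section \<open>Brace powers and the adjoint action\<close>

lemma brace_brpow: "1 \<le> k \<Longrightarrow> brace (k * (n - 1) + 1) n (brpow n x k) x = brpow n x (Suc k)"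
  by (cases k) auto

lemma hoch_cochain_brpow:
  assumes n: "odd n" and x: "hoch_cochain n x" and k: "1 \<le> k"
  shows "hoch_cochain (k * (n - 1) + 1) (brpow n x k)"
  using k
proof (induction k rule: nat_induct_at_least)
  case base
  then show ?case
    using n x by (cases n) auto
next
  case (Suc k)
  have n1: "1 \<le> n"
    using odd_pos[OF n] by simp
  have "hoch_cochain (k * (n - 1) + 1 + n - 1) (brpow n x (Suc k))"
    using hoch_cochain_brace[OF Suc.IH x n1] unfolding brace_brpow[OF Suc.hyps] .
  moreover have "k * (n - 1) + 1 + n - 1 = Suc k * (n - 1) + 1"
    using n1 by simp
  ultimately show ?case
    by metis
qed

lemma adpow_Suc_odd:
  "odd n \<Longrightarrow> adpow n m x (Suc i) b =
     (\<lambda>ys. brace n (m + i * (n - 1)) x (adpow n m x i b) ys - brace (m + i * (n - 1)) n (adpow n m x i b) x ys)"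
  by (simp add: gbracket_def)

fun rbrace_pow :: "nat \<Rightarrow> ('a::ring list \<Rightarrow> 'a) \<Rightarrow> nat \<Rightarrow> nat \<Rightarrow> ('a list \<Rightarrow> 'a) \<Rightarrow> 'a list \<Rightarrow> 'a" where
  "rbrace_pow n x d 0 f = f"
| "rbrace_pow n x d (Suc j) f = brace (d + j * (n - 1)) n (rbrace_pow n x d j f) x"

(* R^j ((ad x)^i b), where R is the right brace with x and b has degree m. *)
definition rbrace_adpow :: "nat \<Rightarrow> nat \<Rightarrow> ('a::ring list \<Rightarrow> 'a) \<Rightarrow> ('a list \<Rightarrow> 'a) \<Rightarrow> nat \<Rightarrow> nat \<Rightarrow> 'a list \<Rightarrow> 'a" where
  "rbrace_adpow n m x b j i = rbrace_pow n x (m + i * (n - 1)) j (adpow n m x i b)"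

definition rbrace_adpow_sum ::
  "nat \<Rightarrow> nat \<Rightarrow> ('a::ring list \<Rightarrow> 'a) \<Rightarrow> ('a list \<Rightarrow> 'a) \<Rightarrow> nat \<Rightarrow> (nat \<Rightarrow> nat) \<Rightarrow> 'a list \<Rightarrow> 'a" where
  "rbrace_adpow_sum n m x b t c = (\<lambda>xs. \<Sum>j\<le>t. nsm (c j) (rbrace_adpow n m x b (t - j) j xs))"

lemma brace_rbrace_adpow:
  assumes "j \<le> t"
  shows "brace (m + t * (n - 1)) n (rbrace_adpow n m x b (t - j) j) x = rbrace_adpow n m x b (Suc t - j) j"
proof -
  have deg: "m + j * (n - 1) + (t - j) * (n - 1) = m + t * (n - 1)"
    using assms by (simp flip: add_mult_distrib)
  have "rbrace_adpow n m x b (Suc t - j) j =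
      brace (m + j * (n - 1) + (t - j) * (n - 1)) n (rbrace_adpow n m x b (t - j) j) x"
    using assms by (simp add: rbrace_adpow_def Suc_diff_le)
  then show ?thesis
    unfolding deg by (rule sym)
qed

lemma brace_rbrace_adpow_sum:
  assumes "c (Suc t) = 0"
  shows "brace (m + t * (n - 1)) n (rbrace_adpow_sum n m x b t c) x xs = rbrace_adpow_sum n m x b (Suc t) c xs"
proof -
  have "brace (m + t * (n - 1)) n (rbrace_adpow_sum n m x b t c) x xs =
      (\<Sum>j\<le>t. nsm (c j) (brace (m + t * (n - 1)) n (rbrace_adpow n m x b (t - j) j) x xs))"
    by (simp add: rbrace_adpow_sum_def brace_sum_left brace_nsm_left)
  also have "\<dots> = (\<Sum>j\<le>t. nsm (c j) (rbrace_adpow n m x b (Suc t - j) j xs))"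
    by (intro sum.cong refl) (metis atMost_iff brace_rbrace_adpow)
  also have "\<dots> = rbrace_adpow_sum n m x b (Suc t) c xs"
    using assms by (simp add: rbrace_adpow_sum_def)
  finally show ?thesis .
qed

lemma rbrace_adpow_sum_add:
  "rbrace_adpow_sum n m x b t c xs + rbrace_adpow_sum n m x b t d xs = rbrace_adpow_sum n m x b t (\<lambda>j. c j + d j) xs"
  by (simp add: rbrace_adpow_sum_def nsm_add_left sum.distrib)

definition brpow_brace_adpow :: "nat \<Rightarrow> nat \<Rightarrow> ('a::ring list \<Rightarrow> 'a) \<Rightarrow> ('a list \<Rightarrow> 'a) \<Rightarrow> nat \<Rightarrow> nat \<Rightarrow> 'a list \<Rightarrow> 'a" where
  "brpow_brace_adpow n m x b k i = brace (k * (n - 1) + 1) (m + i * (n - 1)) (brpow n x k) (adpow n m x i b)"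

lemma brpow_brace_adpow_1:
  assumes n: "odd n"
  shows "brpow_brace_adpow n m x b 1 i xs = rbrace_adpow n m x b 0 (Suc i) xs + rbrace_adpow n m x b 1 i xs"
  using odd_pos[OF n] by (simp add: brpow_brace_adpow_def rbrace_adpow_def adpow_Suc_odd[OF n] del: adpow.simps)

(* The pre-Lie identity with z = x^[k], together with x{y} - y{x} = [x, y] for y = (ad x)^i b. *)
lemma brpow_brace_adpow_Suc:
  assumes n: "odd n" and x: "hoch_cochain n x" and m: "1 \<le> m" and k: "1 \<le> k"
    and len: "length xs = m + (Suc k + i) * (n - 1)"
  shows "brpow_brace_adpow n m x b (Suc k) i xs =
    brace (m + (k + i) * (n - 1)) n (brpow_brace_adpow n m x b k i) x xs + brpow_brace_adpow n m x b k (Suc i) xs"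
proof -
  obtain q where nq: "n = Suc q"
    using n by (cases n) auto
  define a where "a = k * (n - 1) + 1"
  define d where "d = m + i * (n - 1)"
  define e where "e = m + Suc i * (n - 1)"
  let ?z = "brpow n x k" and ?y = "adpow n m x i b"
  have z: "hoch_cochain a ?z"
    unfolding a_def by (rule hoch_cochain_brpow[OF n x k])
  have "1 \<le> d" and "length xs + 2 = a + n + d" and "length xs + 1 = a + e"
    using m len unfolding a_def d_def e_def nq by (simp_all add: algebra_simps)
  note pre_lie = brace_pre_lie[OF z n \<open>1 \<le> d\<close> \<open>length xs + 2 = a + n + d\<close>, of x ?y]
  have "a + n - 1 = Suc k * (n - 1) + 1" and "a + d - 1 = m + (k + i) * (n - 1)"
    and "n + d - 1 = e" and "d + n - 1 = e"
    unfolding a_def d_def e_def nq by (simp_all add: algebra_simps)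
  moreover have "brace a n ?z x = brpow n x (Suc k)"
    unfolding a_def by (rule brace_brpow[OF k])
  moreover have "brace a e ?z (brace n d x ?y) xs - brace a e ?z (brace d n ?y x) xs =
      brpow_brace_adpow n m x b k (Suc i) xs"
    unfolding brace_diff_right[OF z \<open>length xs + 1 = a + e\<close>, symmetric]
    unfolding brpow_brace_adpow_def a_def d_def e_def adpow_Suc_odd[OF n] ..
  ultimately show ?thesis
    using pre_lie unfolding brpow_brace_adpow_def a_def d_def by (simp add: algebra_simps)
qed

lemma choose_shift_Suc:
  "(if i \<le> j then k choose (j - i) else 0) + (if Suc i \<le> j then k choose (j - Suc i) else 0) =
   (if i \<le> j then Suc k choose (j - i) else 0)"
proof (cases "i < j")
  case True
  then have "j - i = Suc (j - Suc i)"
    by simp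
  then show ?thesis
    using True by simp
qed auto

(* The coefficients are indexed by the total number t = k + i of operators applied to b, so that the
   induction step only adds coefficient functions pointwise (Pascal's rule, choose_shift_Suc). *)
lemma brpow_brace_adpow_eq:
  assumes n: "odd n" and x: "hoch_cochain n x" and m: "1 \<le> m" and k: "1 \<le> k"
    and len: "length xs = m + (k + i) * (n - 1)"
  shows "brpow_brace_adpow n m x b k i xs =
    rbrace_adpow_sum n m x b (k + i) (\<lambda>j. if i \<le> j then k choose (j - i) else 0) xs"
  using k len
proof (induction k arbitrary: i xs rule: nat_induct_at_least)
  case base
  have "(\<Sum>j<i. nsm (if i \<le> j then 1 choose (j - i) else 0) (rbrace_adpow n m x b (Suc i - j) j xs)) = 0"
    by (intro sum.neutral) auto
  then show ?case
    using brpow_brace_adpow_1[OF n, of m x b i xs] unfolding rbrace_adpow_sum_def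
    by (simp add: lessThan_Suc_atMost[symmetric])
next
  case (Suc k)
  let ?c = "\<lambda>k i j. if i \<le> j then k choose (j - i) else 0"
  have "length xs + 1 = m + (k + i) * (n - 1) + n"
    using Suc.prems odd_pos[OF n] by (simp add: algebra_simps)
  moreover have "cochain_eq (m + (k + i) * (n - 1)) (brpow_brace_adpow n m x b k i)
      (rbrace_adpow_sum n m x b (k + i) (?c k i))"
    using Suc.IH by (auto intro: cochain_eqI)
  ultimately have "brace (m + (k + i) * (n - 1)) n (brpow_brace_adpow n m x b k i) x xs =
      brace (m + (k + i) * (n - 1)) n (rbrace_adpow_sum n m x b (k + i) (?c k i)) x xs"
    by (intro brace_cong_left)
  also have "\<dots> = rbrace_adpow_sum n m x b (Suc (k + i)) (?c k i) xs"
    by (rule brace_rbrace_adpow_sum) simp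
  moreover have "brpow_brace_adpow n m x b k (Suc i) xs = rbrace_adpow_sum n m x b (Suc (k + i)) (?c k (Suc i)) xs"
    using Suc.IH[of xs "Suc i"] Suc.prems by simp
  ultimately show ?case
    using brpow_brace_adpow_Suc[OF n x m Suc.hyps Suc.prems]
    by (simp add: rbrace_adpow_sum_add choose_shift_Suc)
qed


section \<open>The differential of a brace power\<close>

definition cup_brpow :: "nat \<Rightarrow> ('a::ring list \<Rightarrow> 'a) \<Rightarrow> nat \<Rightarrow> nat \<Rightarrow> 'a list \<Rightarrow> 'a" where
  "cup_brpow n x i j = cup (i * (n - 1) + 1) (brpow n x i) (brpow n x j)"

definition cup_brpow_sum :: "nat \<Rightarrow> ('a::ring list \<Rightarrow> 'a) \<Rightarrow> nat \<Rightarrow> (nat \<Rightarrow> nat) \<Rightarrow> 'a list \<Rightarrow> 'a" where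
  "cup_brpow_sum n x k c = (\<lambda>xs. \<Sum>i\<in>{1..k - 1}. nsm (c i) (cup_brpow n x i (k - i) xs))"

lemma brace_cup_brpow:
  assumes n: "odd n" and i: "1 \<le> i" and j: "1 \<le> j" and len: "length xs + 1 = (i + j) * (n - 1) + 2 + n"
  shows "brace ((i + j) * (n - 1) + 2) n (cup_brpow n x i j) x xs = cup_brpow n x (Suc i) j xs + cup_brpow n x i (Suc j) xs"
proof -
  have deg: "(i + j) * (n - 1) + 2 = (i * (n - 1) + 1) + (j * (n - 1) + 1)"
    by (simp add: add_mult_distrib)
  have len': "length xs + 1 = (i * (n - 1) + 1) + (j * (n - 1) + 1) + n"
    using len deg by simp
  have deg': "i * (n - 1) + 1 + n - 1 = Suc i * (n - 1) + 1"
    using odd_pos[OF n] by simp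
  show ?thesis
    unfolding deg cup_brpow_def brace_cup[OF n len'] brace_brpow[OF i] brace_brpow[OF j] deg' ..
qed

lemma sum_choose_Suc:
  fixes Q :: "nat \<Rightarrow> nat \<Rightarrow> 'b::comm_monoid_add"
  assumes "1 \<le> k"
  shows "(\<Sum>i\<in>{1..k - 1}. nsm (k choose i) (Q (Suc i) (k - i) + Q i (Suc (k - i)))) + Q k 1 + Q 1 k
       = (\<Sum>i\<in>{1..k}. nsm (Suc k choose i) (Q i (Suc k - i)))"
proof -
  obtain k' where k: "k = Suc k'"
    using assms by (cases k) auto
  have pascal: "Suc k choose i = (k choose (i - 1)) + (k choose i)" if "i \<in> {1..k}" for i
    using that by (cases i) simp_all
  have "(\<Sum>i\<in>{1..k}. nsm (Suc k choose i) (Q i (Suc k - i))) =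
     (\<Sum>i\<in>{1..k}. nsm (k choose (i - 1)) (Q i (Suc k - i)) + nsm (k choose i) (Q i (Suc k - i)))"
    by (intro sum.cong refl) (simp add: pascal nsm_add_left)
  also have "\<dots> =
     (\<Sum>i\<in>{1..k}. nsm (k choose (i - 1)) (Q i (Suc k - i))) + (\<Sum>i\<in>{1..k}. nsm (k choose i) (Q i (Suc k - i)))"
    by (rule sum.distrib)
  also have "(\<Sum>i\<in>{1..k}. nsm (k choose (i - 1)) (Q i (Suc k - i))) =
      Q 1 k + (\<Sum>i\<in>{1..k'}. nsm (k choose i) (Q (Suc i) (k - i)))"
  proof -
    have "(\<Sum>i\<in>{1..k}. nsm (k choose (i - 1)) (Q i (Suc k - i))) =
        (\<Sum>i\<in>{0..k'}. nsm (k choose i) (Q (Suc i) (k - i)))"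
      unfolding k One_nat_def sum.shift_bounds_cl_Suc_ivl by simp
    then show ?thesis
      by (simp add: sum.atLeast_Suc_atMost)
  qed
  also have "(\<Sum>i\<in>{1..k}. nsm (k choose i) (Q i (Suc k - i))) =
      (\<Sum>i\<in>{1..k'}. nsm (k choose i) (Q i (Suc (k - i)))) + Q k 1"
  proof -
    have "(\<Sum>i\<in>{1..k'}. nsm (k choose i) (Q i (Suc k - i))) = (\<Sum>i\<in>{1..k'}. nsm (k choose i) (Q i (Suc (k - i))))"
      by (intro sum.cong refl) (simp add: k Suc_diff_le)
    then show ?thesis
      unfolding k by simp
  qed
  finally show ?thesis
    unfolding k by (simp add: nsm_add_right sum.distrib algebra_simps)
qed

lemma brace_cup_brpow_sum:
  assumes n: "odd n" and k: "1 \<le> k" and len: "length xs = Suc k * (n - 1) + 2"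
  shows "brace (k * (n - 1) + 2) n (cup_brpow_sum n x k (\<lambda>i. k choose i)) x xs + cup_brpow n x k 1 xs + cup_brpow n x 1 k xs
       = cup_brpow_sum n x (Suc k) (\<lambda>i. Suc k choose i) xs"
proof -
  have "brace (k * (n - 1) + 2) n (cup_brpow n x i (k - i)) x xs = cup_brpow n x (Suc i) (k - i) xs + cup_brpow n x i (Suc (k - i)) xs"
    if i: "i \<in> {1..k - 1}" for i
  proof -
    have ik: "i + (k - i) = k"
      using i by auto
    obtain q where q: "n = Suc q"
      using odd_pos[OF n] by (cases n) auto
    have deg: "k * (n - 1) + 2 = (i + (k - i)) * (n - 1) + 2"
      unfolding ik ..
    have len': "length xs + 1 = (i + (k - i)) * (n - 1) + 2 + n"
      unfolding ik using len unfolding q by simp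
    show ?thesis
      unfolding deg by (rule brace_cup_brpow[OF n _ _ len']) (use i in auto)
  qed
  then have "brace (k * (n - 1) + 2) n (cup_brpow_sum n x k (\<lambda>i. k choose i)) x xs =
      (\<Sum>i\<in>{1..k - 1}. nsm (k choose i) (cup_brpow n x (Suc i) (k - i) xs + cup_brpow n x i (Suc (k - i)) xs))"
    by (simp add: cup_brpow_sum_def brace_sum_left brace_nsm_left)
  then show ?thesis
    unfolding cup_brpow_sum_def using sum_choose_Suc[OF k, of "\<lambda>i j. cup_brpow n x i j xs"] by simp
qed

lemma hdiff_brpow:
  assumes n: "odd n" and x: "hoch_cochain n x"
    and dx: "\<forall>xs. length xs = Suc n \<longrightarrow> hdiff n x xs = nsm p (b xs)"
    and k: "1 \<le> k" and len: "length xs = k * (n - 1) + 2"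
  shows "hdiff (k * (n - 1) + 1) (brpow n x k) xs =
    nsm p (rbrace_adpow_sum n (Suc n) x b (k - 1) (\<lambda>j. k choose Suc j) xs) - cup_brpow_sum n x k (\<lambda>i. k choose i) xs"
  using k len
proof (induction k arbitrary: xs rule: nat_induct_at_least)
  case base
  then show ?case
    using dx odd_pos[OF n]
    by (simp add: rbrace_adpow_sum_def rbrace_adpow_def cup_brpow_sum_def)
next
  case (Suc k)
  define a where "a = k * (n - 1) + 1"
  let ?A = "\<lambda>c. rbrace_adpow_sum n (Suc n) x b k c xs" and ?S = "cup_brpow_sum n x k (\<lambda>i. k choose i)"
  have "odd a"
    using n unfolding a_def by (cases n) auto
  have z: "hoch_cochain a (brpow n x k)"
    unfolding a_def by (rule hoch_cochain_brpow[OF n x Suc.hyps])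
  obtain q where q: "n = Suc q"
    using odd_pos[OF n] by (cases n) auto
  have len: "length xs = a + n" and len1: "length xs + 1 = a + 1 + n" and len2: "length xs + 1 = a + (n + 1)"
    using Suc.prems unfolding a_def q by simp_all
  have "Suc k * (n - 1) + 1 = a + n - 1"
    unfolding a_def q by simp
  moreover have "brpow n x (Suc k) = brace a n (brpow n x k) x"
    unfolding a_def by (rule brace_brpow[OF Suc.hyps, symmetric])
  ultimately have hd: "hdiff (Suc k * (n - 1) + 1) (brpow n x (Suc k)) xs =
      brace (a + 1) n (hdiff a (brpow n x k)) x xs + brace a (n + 1) (brpow n x k) (hdiff n x) xs
      - cup a (brpow n x k) x xs - cup n x (brpow n x k) xs"
    using hdiff_brace[OF z \<open>odd a\<close> n len] by simp
  have T1: "brace (a + 1) n (hdiff a (brpow n x k)) x xs = nsm p (?A (\<lambda>j. k choose Suc j)) - brace (a + 1) n ?S x xs"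
  proof -
    have "cochain_eq (a + 1) (hdiff a (brpow n x k))
        (\<lambda>ys. nsm p (rbrace_adpow_sum n (Suc n) x b (k - 1) (\<lambda>j. k choose Suc j) ys) - ?S ys)"
      using Suc.IH unfolding a_def by (auto intro: cochain_eqI)
    then have "brace (a + 1) n (hdiff a (brpow n x k)) x xs =
        nsm p (brace (a + 1) n (rbrace_adpow_sum n (Suc n) x b (k - 1) (\<lambda>j. k choose Suc j)) x xs) - brace (a + 1) n ?S x xs"
      using len1 by (simp add: brace_cong_left brace_diff_left brace_nsm_left)
    moreover have "a + 1 = Suc n + (k - 1) * (n - 1)"
      unfolding a_def q using Suc.hyps by (cases k) auto
    ultimately show ?thesis
      using brace_rbrace_adpow_sum[of "\<lambda>j. k choose Suc j" "k - 1" "Suc n" n x b xs] Suc.hyps by simp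
  qed
  have T2: "brace a (n + 1) (brpow n x k) (hdiff n x) xs = nsm p (?A (\<lambda>j. k choose j))"
  proof -
    have "cochain_eq (n + 1) (hdiff n x) (\<lambda>ys. nsm p (b ys))"
      using dx by (auto intro: cochain_eqI)
    then have "brace a (n + 1) (brpow n x k) (hdiff n x) xs = nsm p (brace a (n + 1) (brpow n x k) b xs)"
      using len2 by (simp add: brace_cong_right brace_nsm_right[OF z])
    also have "brace a (n + 1) (brpow n x k) b xs = brpow_brace_adpow n (Suc n) x b k 0 xs"
      unfolding brpow_brace_adpow_def a_def by simp
    also have "brpow_brace_adpow n (Suc n) x b k 0 xs = ?A (\<lambda>j. k choose j)"
      using brpow_brace_adpow_eq[OF n x _ Suc.hyps] len unfolding a_def by simp
    finally show ?thesis .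
  qed
  have C: "cup a (brpow n x k) x xs = cup_brpow n x k 1 xs" "cup n x (brpow n x k) xs = cup_brpow n x 1 k xs"
    unfolding cup_brpow_def a_def using odd_pos[OF n] by simp_all
  have A: "?A (\<lambda>j. k choose Suc j) + ?A (\<lambda>j. k choose j) =
      rbrace_adpow_sum n (Suc n) x b (Suc k - 1) (\<lambda>j. Suc k choose Suc j) xs"
    by (simp add: rbrace_adpow_sum_add add.commute)
  have S: "brace (a + 1) n ?S x xs + cup_brpow n x k 1 xs + cup_brpow n x 1 k xs =
      cup_brpow_sum n x (Suc k) (\<lambda>i. Suc k choose i) xs"
    using brace_cup_brpow_sum[OF n Suc.hyps] Suc.prems unfolding a_def by (simp add: numeral_2_eq_2)
  have "hdiff (Suc k * (n - 1) + 1) (brpow n x (Suc k)) xs =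
      nsm p (?A (\<lambda>j. k choose Suc j) + ?A (\<lambda>j. k choose j))
      - (brace (a + 1) n ?S x xs + cup_brpow n x k 1 xs + cup_brpow n x 1 k xs)"
    unfolding hd T1 T2 C nsm_add_right by (simp add: algebra_simps)
  then show ?case
    unfolding A S .
qed


section \<open>Reduction modulo p\<close>

lemma cong_choose_pred_prime:
  assumes p: "prime p" and k: "k \<le> p - 1"
  shows "[int ((p - 1) choose k) = (-1) ^ k] (mod int p)"
  using k
proof (induction k)
  case 0
  then show ?case
    by simp
next
  case (Suc k)
  have "p choose Suc k = ((p - 1) choose k) + ((p - 1) choose Suc k)"
    using prime_ge_2_nat[OF p] binomial_Suc_Suc[of "p - 1" k] by simp
  moreover have "p dvd (p choose Suc k)"
    using Suc.prems p by (intro dvd_choose_prime) auto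
  ultimately have "[int ((p - 1) choose Suc k) = - int ((p - 1) choose k)] (mod int p)"
    by (simp add: cong_iff_dvd_diff add.commute flip: of_nat_add)
  moreover have "[- int ((p - 1) choose k) = - ((-1) ^ k)] (mod int p)"
    using Suc by (simp add: cong_minus_minus_iff)
  ultimately show ?case
    using cong_trans by fastforce
qed

lemma inv_modp_cong:
  assumes p: "prime p" and i: "0 < i" "i < p"
  shows "[int i * inv_modp p i = 1] (mod int p)"
proof -
  have "\<not> p dvd i"
    using i by (auto dest: dvd_imp_le)
  then have "coprime p i"
    using p by (simp add: prime_imp_coprime)
  then have "\<exists>j. [int i * j = 1] (mod int p)"
    by (simp add: cong_solve_coprime_int coprime_commute)
  then show ?thesis
    unfolding inv_modp_def by (rule someI_ex)
qed

text \<open>i (p choose i) / p = (p - 1 choose i - 1) is congruent to (-1)^(i-1), so i times the sum below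
  is congruent to (-1)^i + (-1)^(i-1) = 0.\<close>

lemma prime_dvd_sign_inv_modp_add_choose_div:
  assumes p: "prime p" and i: "1 \<le> i" "i < p"
  shows "int p dvd ((-1) ^ i * inv_modp p i + int ((p choose i) div p))"
proof -
  define d where "d = (p choose i) div p"
  define e where "e = (-1) ^ i * inv_modp p i + int d"
  have "p * d = p choose i"
    using p i by (simp add: d_def dvd_choose_prime prime_gt_0_nat)
  moreover have "i * (p choose i) = p * ((p - 1) choose (i - 1))"
    using times_binomial_minus1_eq[of i p] i by simp
  ultimately have "i * d = (p - 1) choose (i - 1)"
    using prime_gt_0_nat[OF p] by (metis mult.left_commute mult_left_cancel not_gr0)
  then have "[int (i * d) = (-1) ^ (i - 1)] (mod int p)"
    using cong_choose_pred_prime[OF p, of "i - 1"] i by simp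
  moreover have "[int i * inv_modp p i = 1] (mod int p)"
    using p i by (simp add: inv_modp_cong)
  ultimately have "[(-1) ^ i * (int i * inv_modp p i) + int (i * d) = (-1) ^ i * 1 + (-1) ^ (i - 1)] (mod int p)"
    by (intro cong_add cong_mult cong_refl)
  moreover have "(-1) ^ i * 1 + (-1) ^ (i - 1) = (0::int)"
    using i by (cases i) simp_all
  moreover have "int i * e = (-1) ^ i * (int i * inv_modp p i) + int (i * d)"
    by (simp add: e_def algebra_simps)
  ultimately have "int p dvd int i * e"
    by (simp add: cong_0_iff)
  moreover have "\<not> int p dvd int i"
    using i by (auto dest: dvd_imp_le)
  ultimately show ?thesis
    using p prime_dvd_mult_iff[of "int p"] by (auto simp: e_def d_def)
qed


lemma nsm_bock:
  assumes "\<exists>z. hdiff N f xs = nsm p z"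
  shows "nsm p (bock p N f xs) = hdiff N f xs"
proof -
  have "\<exists>z. nsm p z = hdiff N f xs"
    using assms by metis
  then show ?thesis
    unfolding bock_def by (rule someI_ex)
qed

lemma bock_eqI:
  assumes tf: "torsion_free TYPE('a::ring)" and p: "0 < p" and z: "hdiff N f xs = nsm p (z::'a)"
  shows "bock p N f xs = z"
proof -
  have "nsm p (bock p N f xs) = nsm p z"
    using nsm_bock[of N f xs p] z by auto
  then have "nsm p (bock p N f xs - z) = 0"
    by (simp add: nsm_diff_right)
  then have "bock p N f xs - z = 0"
    using tf p unfolding torsion_free_def by blast
  then show ?thesis
    by simp
qed

lemma bock_xi1:
  assumes p: "prime p" and tf: "torsion_free TYPE('a::ring)" and n: "odd n" and x: "hoch_cochain n x"
    and dx: "\<forall>xs. length xs = Suc n \<longrightarrow> hdiff n x xs = nsm p (b xs)"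
    and len: "length (xs::'a list) = p * (n - 1) + 2"
  shows "bock p (p * (n - 1) + 1) (xi1 p n x) xs =
    rbrace_adpow_sum n (Suc n) x b (p - 1) (\<lambda>j. p choose Suc j) xs - cup_brpow_sum n x p (\<lambda>i. (p choose i) div p) xs"
proof (rule bock_eqI[OF tf prime_gt_0_nat[OF p]])
  have "cup_brpow_sum n x p (\<lambda>i. p choose i) xs = nsm p (cup_brpow_sum n x p (\<lambda>i. (p choose i) div p) xs)"
    unfolding cup_brpow_sum_def nsm_sum_right nsm_nsm
  proof (intro sum.cong refl)
    fix i assume "i \<in> {1..p - 1}"
    then have "p dvd (p choose i)"
      using p by (intro dvd_choose_prime) auto
    then show "nsm (p choose i) (cup_brpow n x i (p - i) xs) = nsm (p * ((p choose i) div p)) (cup_brpow n x i (p - i) xs)"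
      by simp
  qed
  then show "hdiff (p * (n - 1) + 1) (xi1 p n x) xs = nsm p
      (rbrace_adpow_sum n (Suc n) x b (p - 1) (\<lambda>j. p choose Suc j) xs - cup_brpow_sum n x p (\<lambda>i. (p choose i) div p) xs)"
    using hdiff_brpow[OF n x dx _ len] prime_gt_0_nat[OF p] unfolding xi1_def by (simp add: nsm_diff_right)
qed

lemma rbrace_adpow_sum_choose_prime:
  assumes p: "prime p"
  obtains z where "rbrace_adpow_sum n m x b (p - 1) (\<lambda>j. p choose Suc j) xs = adpow n m x (p - 1) b xs + nsm p z"
proof
  let ?z = "\<Sum>j<p - 1. nsm ((p choose Suc j) div p) (rbrace_adpow n m x b (p - 1 - j) j xs)"
  have "p choose Suc j = p * ((p choose Suc j) div p)" if "j < p - 1" for j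
    using p that by (simp add: dvd_choose_prime prime_gt_0_nat)
  then have "(\<Sum>j<p - 1. nsm (p choose Suc j) (rbrace_adpow n m x b (p - 1 - j) j xs)) = nsm p ?z"
    unfolding nsm_sum_right nsm_nsm by (intro sum.cong refl) simp
  then show "rbrace_adpow_sum n m x b (p - 1) (\<lambda>j. p choose Suc j) xs = adpow n m x (p - 1) b xs + nsm p ?z"
    using prime_gt_0_nat[OF p]
    unfolding rbrace_adpow_sum_def lessThan_Suc_atMost[symmetric] sum.lessThan_Suc
    by (simp add: rbrace_adpow_def)
qed

lemma zeta1_add_cup_brpow_sum:
  assumes p: "prime p"
  obtains z where "zeta1 p n x xs + cup_brpow_sum n x p (\<lambda>i. (p choose i) div p) xs = nsm p z"
proof
  define w where "w i = ((-1) ^ i * inv_modp p i + int ((p choose i) div p)) div int p" for i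
  let ?P = "\<lambda>i. cup_brpow n x i (p - i) xs"
  have "zeta1 p n x xs + cup_brpow_sum n x p (\<lambda>i. (p choose i) div p) xs =
      (\<Sum>i\<in>{1..p - 1}. zsm ((-1) ^ i * inv_modp p i + int ((p choose i) div p)) (?P i))"
    by (simp add: zeta1_def cup_brpow_sum_def cup_brpow_def zsm_add_left sum.distrib)
  also have "\<dots> = (\<Sum>i\<in>{1..p - 1}. nsm p (zsm (w i) (?P i)))"
  proof (intro sum.cong refl)
    fix i assume "i \<in> {1..p - 1}"
    then have "1 \<le> i" "i < p"
      by auto
    then have "(-1) ^ i * inv_modp p i + int ((p choose i) div p) = int p * w i"
      using prime_dvd_sign_inv_modp_add_choose_div[OF p] by (simp add: w_def)
    then show "zsm ((-1) ^ i * inv_modp p i + int ((p choose i) div p)) (?P i) = nsm p (zsm (w i) (?P i))"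
      by (simp add: zsm_of_nat_mult)
  qed
  finally show "zeta1 p n x xs + cup_brpow_sum n x p (\<lambda>i. (p choose i) div p) xs =
      nsm p (\<Sum>i\<in>{1..p - 1}. zsm (w i) (?P i))"
    by (simp add: nsm_sum_right)
qed


theorem proposition6p5:
  fixes p n :: nat and xt :: "'a::ring list \<Rightarrow> 'a"
  assumes "prime p" and "3 \<le> p"
    and "torsion_free TYPE('a)"
    and "odd n"
    and "hoch_cochain n xt"
    and "\<forall>xs. length xs = Suc n \<longrightarrow> (\<exists>z. hdiff n xt xs = nsm p z)"
  shows "cong_modp p (p * (n - 1) + 2) (zeta1 p n xt)
           (\<lambda>xs. bock p (p * (n - 1) + 1) (xi1 p n xt) xs
                 - adpow n (Suc n) xt (p - 1) (bock p n xt) xs)"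
  unfolding cong_modp_def
proof (intro allI impI)
  \<comment> \<open>The argument works for every prime p.\<close>
  fix xs :: "'a list"
  assume len: "length xs = p * (n - 1) + 2"
  let ?b = "bock p n xt" and ?D = "cup_brpow_sum n xt p (\<lambda>i. (p choose i) div p) xs"
  have dx: "\<forall>xs. length xs = Suc n \<longrightarrow> hdiff n xt xs = nsm p (?b xs)"
    using assms(6) nsm_bock by metis
  obtain z1 where z1: "zeta1 p n xt xs + ?D = nsm p z1"
    using zeta1_add_cup_brpow_sum[OF assms(1)] .
  obtain z2 where z2: "rbrace_adpow_sum n (Suc n) xt ?b (p - 1) (\<lambda>j. p choose Suc j) xs =
      adpow n (Suc n) xt (p - 1) ?b xs + nsm p z2"
    using rbrace_adpow_sum_choose_prime[OF assms(1)] .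
  have "bock p (p * (n - 1) + 1) (xi1 p n xt) xs = adpow n (Suc n) xt (p - 1) ?b xs + nsm p z2 - ?D"
    using bock_xi1[OF assms(1,3,4,5) dx len] z2 by simp
  moreover have "zeta1 p n xt xs = nsm p z1 - ?D"
    using z1 by (simp add: eq_diff_eq)
  ultimately have "zeta1 p n xt xs - (bock p (p * (n - 1) + 1) (xi1 p n xt) xs - adpow n (Suc n) xt (p - 1) ?b xs) =
      nsm p (z1 - z2)"
    by (simp add: nsm_diff_right)
  then show "\<exists>z. zeta1 p n xt xs - (bock p (p * (n - 1) + 1) (xi1 p n xt) xs - adpow n (Suc n) xt (p - 1) ?b xs) =
      nsm p z" ..
qed

end
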